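(* Let $n,\lambda,\mu$ be positive integers with $\mu>\lambda$, and let $\mathcal{A}$ be a strong path decomposition of $\lambda K_n$. Then $\lambda K_n$ is strongly $2$-extendible with respect to $(\mathcal{A},\mu K_n)$ if and only if (B1) $2|\mathcal{S}_0(\mathcal{A})|+|\mathcal{S}_1(\mathcal{A})|\le(\mu-\lambda)\frac{n(n-1)}{2}$, and (B2) for every pair of distinct vertices $u,v$, $|\mathcal{S}_0(\mathcal{A})|+|\mathcal{S}_1(u,v,\mathcal{A})|\le(\mu-\lambda)\left(\frac{n(n-1)}{2}-1\right)$.
   Context: Graphs may have multiple edges. $\lambda K_n$ is the loopless multigraph on $n$ vertices with every pair of distinct vertices joined by exactly $\lambda$ edges; $\lambda K_n$ is regarded as a subgraph of $\mu K_n$ on the same vertex set, and $\mu K_n\setminus\lambda K_n$ denotes the graph obtained by deleting the edges of $\lambda K_n$. A decomposition of size $k$ of a graph $G$ is an ordered $k$-tuple $(G(1),\dots,G(k))$ of spanning subgraphs of $G$ (colour classes; possibly edgeless) with pairwise disjoint edge sets whose union is $E(G)$. A path decomposition is one in which every colour class is a vertex-disjoint union of paths and cycles (two parallel edges form a cycle of length 2); it is strong if no colour class contains a cycle. $\mathcal{S}_i(\mathcal{A})$ is the set of colour classes of $\mathcal{A}$ with exactly $i$ edges, and $\mathcal{S}_1(u,v,\mathcal{A})$ is the set of those in $\mathcal{S}_1(\mathcal{A})$ whose single edge joins $u$ and $v$. For a graph $G\subseteq H$, a strong path decomposition $\mathcal{A}$ of $G$ with $k$ colour classes and a positive integer $\alpha$,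 $G$ is strongly $\alpha$-extendible with respect to $(\mathcal{A},H)$ if there is a graph $F\subseteq H\setminus G$ and a strong path decomposition $\mathcal{A}^*$ of $G\cup F$ of size $k$ whose restriction to $G$ is $\mathcal{A}$ and each $\mathcal{A}^*(i)$ has at least $\alpha$ edges. *)

theory Defs
  imports Main "HOL-Library.Multiset"
begin

(* Vertices are natural numbers; the vertex set of K_n is {0..<n}.
   An edge is an unordered pair {u,v} (u ~= v), a multigraph is a multiset of edges. *)

definition pairs :: "nat \<Rightarrow> nat set set" where
  "pairs n = {e. \<exists>u v. u < v \<and> v < n \<and> e = {u, v}}"

definition complete_multi :: "nat \<Rightarrow> nat \<Rightarrow> nat set multiset" where
  "complete_multi lam n = (\<Sum>e\<in>pairs n. replicate_mset lam e)"

definition has_cycle :: "nat set set \<Rightarrow> bool" where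
  "has_cycle E \<longleftrightarrow> (\<exists>vs. length vs \<ge> 3 \<and> distinct vs \<and>
      (\<forall>i < length vs. {vs ! i, vs ! ((i + 1) mod length vs)} \<in> E))"

(* A colour class of a strong path decomposition: a vertex-disjoint union of paths,
   no cycles (in particular no two parallel edges, hence it is a set of edges). *)
definition linear_forest :: "nat set set \<Rightarrow> bool" where
  "linear_forest E \<longleftrightarrow> finite E \<and> (\<forall>e\<in>E. \<exists>u v. u \<noteq> v \<and> e = {u, v}) \<and>
     (\<forall>v. card {e\<in>E. v \<in> e} \<le> 2) \<and> \<not> has_cycle E"

definition strong_path_decomp :: "nat \<Rightarrow> (nat \<Rightarrow> nat set set) \<Rightarrow> nat set multiset \<Rightarrow> bool" where
  "strong_path_decomp k A G \<longleftrightarrow> (\<forall>i<k. linear_forest (A i)) \<and> (\<Sum>i<k. mset_set (A i)) = G"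

definition strongly_extendible ::
  "nat \<Rightarrow> nat set multiset \<Rightarrow> nat \<Rightarrow> (nat \<Rightarrow> nat set set) \<Rightarrow> nat set multiset \<Rightarrow> bool" where
  "strongly_extendible alpha G k A H \<longleftrightarrow>
     (\<exists>F A'. F \<subseteq># H - G \<and> strong_path_decomp k A' (G + F) \<and>
        (\<forall>i<k. A i \<subseteq> A' i \<and> card (A' i) \<ge> alpha))"

definition S :: "nat \<Rightarrow> nat \<Rightarrow> (nat \<Rightarrow> nat set set) \<Rightarrow> nat set" where
  "S j k A = {i. i < k \<and> card (A i) = j}"

definition S1uv :: "nat \<Rightarrow> nat \<Rightarrow> nat \<Rightarrow> (nat \<Rightarrow> nat set set) \<Rightarrow> nat set" where
  "S1uv u v k A = {i. i < k \<and> A i = {{u, v}}}"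

end

theory Submission
  imports Defs
begin

text \<open>
A colour class with j < 2 edges needs at least 2 - j new edges, all taken from the multigraph
(mu - lam) K_n of available edges. Counting all new edges gives (B1); counting only those different
from uv gives (B2), since a class that is empty or consists of uv alone still needs a new edge
other than uv.

Conversely, first reserve an arbitrary available edge for each empty class. Then every deficient
class owns one edge and needs one further available edge different from it. Such a simultaneous
choice exists as soon as, for every edge x, the available copies of x plus the number of classes
that must avoid x never exceed the number of available edges; this Hall-type condition is what
(B1) and (B2) say. It is established greedily, always serving first the edge x for which this
sum is largest.
\<close>

section \<open>Choosing elements of a multiset that avoid forbidden values\<close>

lemma sum_count_le_size: "(\<Sum>x\<in>X. count M x) \<le> size M"
proof (cases "finite X")
  case True
  have "(\<Sum>x\<in>X. count M x) = (\<Sum>x\<in>X \<inter> set_mset M. count M x)"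
    using True by (intro sum.mono_neutral_right) (auto simp: count_eq_zero_iff)
  also have "\<dots> \<le> (\<Sum>x\<in>set_mset M. count M x)"
    by (intro sum_mono2) auto
  finally show ?thesis by (simp add: size_multiset_overloaded_eq)
qed simp

lemma sum_card_fibres_le:
  assumes "finite I"
  shows "(\<Sum>x\<in>X. card {i\<in>I. f i = x}) \<le> card I"
proof (cases "finite X")
  case True
  have "(\<Sum>x\<in>X. card {i\<in>I. f i = x}) = card (\<Union>x\<in>X. {i\<in>I. f i = x})"
    using True assms by (intro card_UN_disjoint[symmetric]) auto
  also have "\<dots> \<le> card I"
    using assms by (intro card_mono) auto
  finally show ?thesis .
qed simp

lemma count_sum_singletons:
  "finite I \<Longrightarrow> count (\<Sum>i\<in>I. {#g i#}) x = card {i\<in>I. g i = x}"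
  by (simp add: count_sum sum.If_cases Int_def conj_commute eq_commute)

lemma filter_mset_sum: "filter_mset P (\<Sum>i\<in>I. M i) = (\<Sum>i\<in>I. filter_mset P (M i))"
  by (induct I rule: infinite_finite_induct) simp_all

lemma size_filter_neq_add_count: "size {#x \<in># M. x \<noteq> a#} + count M a = size M"
  by (metis (mono_tags) add.commute filter_eq_replicate_mset multiset_partition size_replicate_mset
      size_union)

lemma obtain_other_element:
  assumes "count M r < size M"
  obtains q where "q \<in># M" "q \<noteq> r"
proof -
  have "size {#x \<in># M. x \<noteq> r#} \<noteq> 0"
    using size_filter_neq_add_count[of r M] assms by linarith
  then obtain q where "q \<in># {#x \<in># M. x \<noteq> r#}"
    by (metis multiset_nonemptyE size_empty)
  then show ?thesis
    by (auto intro: that)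
qed

lemma avoiding_choice_step:
  fixes M :: "'a multiset" and f :: "'b \<Rightarrow> 'a"
  assumes fin: "finite I" and ne: "I \<noteq> {}" and small: "card I \<le> size M"
    and bound: "\<And>x. count M x + card {i\<in>I. f i = x} \<le> size M"
  obtains i q where "i \<in> I" "q \<in># M" "q \<noteq> f i"
    "\<And>x. x \<noteq> f i \<Longrightarrow> x \<noteq> q \<Longrightarrow> count M x + card {j\<in>I. f j = x} < size M"
proof -
  define s where "s x = card {i\<in>I. f i = x}" for x
  define val where "val x = count M x + s x" for x
  have val_le: "val x \<le> size M" for x
    using bound by (simp add: val_def s_def)
  obtain r where r_max: "\<And>x. val x \<le> val r"
    using Lattices_Big.ex_has_greatest_nat[of "\<lambda>_. True" undefined val "Suc (size M)"] val_le
    by (auto simp: less_Suc_eq_le)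
  have s_two: "s x + s y \<le> card I" if "x \<noteq> y" for x y
    using sum_card_fibres_le[OF fin, where X = "{x, y}" and f = f] that by (simp add: s_def)
  \<comment> \<open>Serve the value r of maximal val: either an index forbidding r receives another element,
      or, if no index forbids r, some index receives r itself. Any other value x then has slack,
      since val x \<le> val r and val x + val r < 2 * size M.\<close>
  show thesis
  proof (cases "s r = 0")
    case False
    then obtain i where i: "i \<in> I" "f i = r"
      by (auto simp: s_def card_gt_0_iff)
    have "count M r < size M"
      using val_le[of r] False by (simp add: val_def)
    then obtain q where q: "q \<in># M" "q \<noteq> r"
      by (rule obtain_other_element)
    have "val x < size M" if "x \<noteq> r" "x \<noteq> q" for x
    proof -
      have "count M x + count M r + count M q \<le> size M"
        using sum_count_le_size[where X = "{x, r, q}" and M = M] that q by simp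
      moreover have "0 < count M q"
        using q by simp
      ultimately show ?thesis
        using s_two[of x r] that small r_max[of x] val_le[of r]
        unfolding val_def by linarith
    qed
    then show thesis
      using that[OF i(1) q(1)] i q by (auto simp: val_def s_def)
  next
    case True
    obtain i where i: "i \<in> I"
      using ne by blast
    have "s (f i) \<noteq> 0"
      using i fin by (auto simp: s_def card_gt_0_iff)
    then have "0 < count M r"
      using r_max[of "f i"] True unfolding val_def by linarith
    then have "r \<in># M"
      by simp
    moreover have "f i \<noteq> r"
      using i True fin by (auto simp: s_def card_gt_0_iff)
    moreover have "val x < size M" if "x \<noteq> f i" "x \<noteq> r" for x
    proof -
      have "count M x + count M r \<le> size M"
        using sum_count_le_size[where X = "{x, r}" and M = M] that by simp
      then show ?thesis
        using s_two[of x "f i"] \<open>s (f i) \<noteq> 0\<close> that small r_max[of x] True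
        by (simp add: val_def)
    qed
    ultimately show thesis
      using that[OF i] by (auto simp: val_def s_def)
  qed
qed

lemma exists_avoiding_choice:
  fixes M :: "'a multiset" and f :: "'b \<Rightarrow> 'a"
  assumes "finite I" "card I \<le> size M"
    and "\<And>x. count M x + card {i\<in>I. f i = x} \<le> size M"
  shows "\<exists>g. (\<forall>i\<in>I. g i \<noteq> f i) \<and> (\<Sum>i\<in>I. {#g i#}) \<subseteq># M"
  using assms
proof (induction "card I" arbitrary: I M)
  case 0
  then show ?case by simp
next
  case (Suc N)
  then have "I \<noteq> {}" by auto
  then obtain i q where i: "i \<in> I" and q: "q \<in># M" "q \<noteq> f i"
    and slack: "\<And>x. x \<noteq> f i \<Longrightarrow> x \<noteq> q \<Longrightarrow> count M x + card {j\<in>I. f j = x} < size M"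
    using avoiding_choice_step[OF Suc.prems(1) _ Suc.prems(2,3)] by blast
  have "\<exists>g. (\<forall>j\<in>I - {i}. g j \<noteq> f j) \<and> (\<Sum>j\<in>I - {i}. {#g j#}) \<subseteq># M - {#q#}"
  proof (rule Suc.hyps)
    show "N = card (I - {i})" "finite (I - {i})"
      using Suc i by auto
    show "card (I - {i}) \<le> size (M - {#q#})"
      using Suc i q by (simp add: size_Diff_singleton)
    have "0 < card {j\<in>I. f j = f i}"
      using Suc.prems(1) i by (auto simp: card_gt_0_iff)
    fix x
    have "{j\<in>I - {i}. f j = x} = {j\<in>I. f j = x} - {i}"
      by auto
    then have "card {j\<in>I - {i}. f j = x} = card {j\<in>I. f j = x} - (if x = f i then 1 else 0)"
      using Suc.prems(1) i by (simp add: card_Diff_singleton_if)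
    then show "count (M - {#q#}) x + card {j\<in>I - {i}. f j = x} \<le> size (M - {#q#})"
      using Suc.prems(3)[of x] slack[of x] q \<open>0 < card {j\<in>I. f j = f i}\<close>
      by (auto simp: size_Diff_singleton)
  qed
  then obtain g where g: "\<forall>j\<in>I - {i}. g j \<noteq> f j" "(\<Sum>j\<in>I - {i}. {#g j#}) \<subseteq># M - {#q#}"
    by blast
  have "(\<Sum>j\<in>I. {#(g(i := q)) j#}) = add_mset q (\<Sum>j\<in>I - {i}. {#g j#})"
    using Suc.prems(1) i by (simp add: sum.remove)
  then have "(\<Sum>j\<in>I. {#(g(i := q)) j#}) \<subseteq># M"
    using g(2) q(1) by (simp add: insert_subset_eq_iff)
  moreover have "\<forall>j\<in>I. (g(i := q)) j \<noteq> f j"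
    using g(1) q(2) by simp
  ultimately show ?case by blast
qed

lemma exists_indexed_submset:
  fixes M :: "'a multiset"
  assumes "finite I" "card I \<le> size M"
  shows "\<exists>p. (\<Sum>i\<in>I. {#p i#}) \<subseteq># M"
  using assms
proof (induction I rule: finite_induct)
  case (insert i I)
  then obtain p where p: "(\<Sum>j\<in>I. {#p j#}) \<subseteq># M"
    by auto
  have "size (\<Sum>j\<in>I. {#p j#}) < size M"
    using insert by simp
  then have "size (M - (\<Sum>j\<in>I. {#p j#})) \<noteq> 0"
    using p by (simp add: size_Diff_submset)
  then obtain y where "y \<in># M - (\<Sum>j\<in>I. {#p j#})"
    by (metis multiset_nonemptyE size_empty)
  then have "(\<Sum>j\<in>I. {#p j#}) + {#y#} \<subseteq># M"
    using p by (metis mset_subset_eq_mono_add_right_cancel single_subset_iff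
        subset_mset.diff_add union_commute)
  moreover have "(\<Sum>j\<in>insert i I. {#(p(i := y)) j#}) = (\<Sum>j\<in>I. {#p j#}) + {#y#}"
    using insert.hyps by (auto intro: sum.cong)
  ultimately show ?case
    by metis
qed simp

lemma pair_completion:
  fixes M :: "'a multiset" and f :: "'b \<Rightarrow> 'a"
  assumes fin: "finite I0" "finite I1" and disj: "I0 \<inter> I1 = {}"
    and enough: "2 * card I0 + card I1 \<le> size M"
    and bound: "\<And>x. count M x + card {i\<in>I1. f i = x} + card I0 \<le> size M"
  obtains a g where "\<forall>i\<in>I1. a i = f i" "\<forall>i\<in>I0 \<union> I1. g i \<noteq> a i"
    "(\<Sum>i\<in>I0. {#a i#}) + (\<Sum>i\<in>I0 \<union> I1. {#g i#}) \<subseteq># M"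
proof -
  \<comment> \<open>Reserve an arbitrary element p i of M for every i in I0 and forbid it there: removing the
      reserved elements from M lowers the count of each x by exactly as much as the new
      prohibitions raise the number of indices avoiding x.\<close>
  obtain p where P: "(\<Sum>i\<in>I0. {#p i#}) \<subseteq># M"
    using exists_indexed_submset[OF fin(1)] enough by force
  define a where "a i = (if i \<in> I0 then p i else f i)" for i
  have a_I0: "(\<Sum>i\<in>I0. {#a i#}) = (\<Sum>i\<in>I0. {#p i#})"
    by (simp add: a_def)
  have fibre_a: "card {i\<in>I0 \<union> I1. a i = x} = count (\<Sum>i\<in>I0. {#p i#}) x + card {i\<in>I1. f i = x}"
    for x
  proof -
    have "{i\<in>I0 \<union> I1. a i = x} = {i\<in>I0. p i = x} \<union> {i\<in>I1. f i = x}"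
      using disj by (auto simp: a_def)
    then show ?thesis
      using fin disj by (simp add: card_Un_disjoint disjoint_iff count_sum_singletons)
  qed
  have "\<exists>g. (\<forall>i\<in>I0 \<union> I1. g i \<noteq> a i) \<and> (\<Sum>i\<in>I0 \<union> I1. {#g i#}) \<subseteq># M - (\<Sum>i\<in>I0. {#p i#})"
  proof (rule exists_avoiding_choice)
    show "finite (I0 \<union> I1)"
      using fin by simp
    show "card (I0 \<union> I1) \<le> size (M - (\<Sum>i\<in>I0. {#p i#}))"
      using P fin disj enough by (simp add: size_Diff_submset card_Un_disjoint)
    fix x
    show "count (M - (\<Sum>i\<in>I0. {#p i#})) x + card {i\<in>I0 \<union> I1. a i = x}
        \<le> size (M - (\<Sum>i\<in>I0. {#p i#}))"
      using P bound[of x] mset_subset_eq_count[OF P, of x] unfolding fibre_a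
      by (simp add: size_Diff_submset)
  qed
  then obtain g where g: "\<forall>i\<in>I0 \<union> I1. g i \<noteq> a i"
    "(\<Sum>i\<in>I0 \<union> I1. {#g i#}) \<subseteq># M - (\<Sum>i\<in>I0. {#p i#})"
    by blast
  have "(\<Sum>i\<in>I0. {#a i#}) + (\<Sum>i\<in>I0 \<union> I1. {#g i#}) \<subseteq># M"
    using g(2) subset_mset.le_diff_conv2[OF P] by (simp add: a_I0 add.commute)
  moreover have "\<forall>i\<in>I1. a i = f i"
    using disj by (auto simp: a_def)
  ultimately show thesis
    using that g(1) by blast
qed

section \<open>Complete multigraphs and linear forests\<close>

lemma doubleton_in_pairs_iff: "{u, v} \<in> pairs n \<longleftrightarrow> u < n \<and> v < n \<and> u \<noteq> v"
proof
  assume "{u, v} \<in> pairs n"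
  then obtain a b where "a < b" "b < n" "{u, v} = {a, b}"
    by (auto simp: pairs_def)
  then show "u < n \<and> v < n \<and> u \<noteq> v"
    by (auto simp: doubleton_eq_iff)
next
  assume "u < n \<and> v < n \<and> u \<noteq> v"
  then have "\<exists>a b. a < b \<and> b < n \<and> {u, v} = {a, b}"
    by (metis insert_commute nat_neq_iff)
  then show "{u, v} \<in> pairs n"
    by (simp add: pairs_def)
qed

lemma pairs_eq: "pairs n = {e. e \<subseteq> {..<n} \<and> card e = 2}"
proof (intro equalityI subsetI)
  fix e assume "e \<in> {e. e \<subseteq> {..<n} \<and> card e = 2}"
  then obtain u v where "e = {u, v}" "u \<noteq> v" "u < n" "v < n"
    by (auto simp: card_2_iff)
  then show "e \<in> pairs n"
    by (simp add: doubleton_in_pairs_iff)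
qed (auto simp: pairs_def)

lemma finite_pairs: "finite (pairs n)"
  unfolding pairs_eq by (rule finite_subset[of _ "Pow {..<n}"]) auto

lemma card_pairs: "card (pairs n) = n * (n - 1) div 2"
  unfolding pairs_eq using n_subsets[of "{..<n}" 2] by (simp add: choose_two)

lemma pairs_are_edges: "e \<in> pairs n \<Longrightarrow> \<exists>u v. u \<noteq> v \<and> e = {u, v}"
  unfolding pairs_def by (blast dest: less_imp_neq)

lemma count_complete_multi: "count (complete_multi lam n) e = (if e \<in> pairs n then lam else 0)"
  using finite_pairs by (simp add: complete_multi_def count_sum sum.If_cases)

lemma size_complete_multi: "size (complete_multi lam n) = lam * card (pairs n)"
  by (simp add: complete_multi_def)

lemma complete_multi_diff: "complete_multi mu n - complete_multi lam n = complete_multi (mu - lam) n"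
  by (rule multiset_eqI) (simp add: count_complete_multi)

lemma card_ge_3_if_has_cycle:
  assumes "has_cycle E" "finite E"
  shows "3 \<le> card E"
proof -
  obtain vs where len: "3 \<le> length vs" and dist: "distinct vs"
    and edge: "\<And>i. i < length vs \<Longrightarrow> {vs ! i, vs ! ((i + 1) mod length vs)} \<in> E"
    using assms(1) unfolding has_cycle_def by blast
  define L where "L = length vs"
  have vs_ne: "vs ! i \<noteq> vs ! j" if "i < L" "j < L" "i \<noteq> j" for i j
    using dist that by (simp add: L_def nth_eq_iff_index_eq)
  have L: "2 < L" "3 mod L < L" "3 mod L \<noteq> 1"
    using len by (auto simp: L_def le_eq_less_or_eq)
  define e0 e1 e2 where "e0 = {vs ! 0, vs ! 1}" and "e1 = {vs ! 1, vs ! 2}"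
    and "e2 = {vs ! 2, vs ! (3 mod L)}"
  have "vs ! 0 \<notin> e1" "vs ! 1 \<notin> e2"
    using vs_ne[of 0 1] vs_ne[of 0 2] vs_ne[of 1 2] vs_ne[of 1 "3 mod L"] L
    by (auto simp: e1_def e2_def)
  then have "card {e0, e1, e2} = 3"
    by (auto simp: e0_def e1_def card_insert_if)
  moreover have "e0 \<in> E" "e1 \<in> E" "e2 \<in> E"
    using edge[of 0] edge[of 1] edge[of 2] L unfolding L_def[symmetric]
    by (simp_all add: e0_def e1_def e2_def numeral_2_eq_2 numeral_3_eq_3)
  ultimately show ?thesis
    using card_mono[OF assms(2), of "{e0, e1, e2}"] by simp
qed

lemma linear_forest_if_card_le_2:
  assumes "finite E" "card E \<le> 2" "\<forall>e\<in>E. \<exists>u v. u \<noteq> v \<and> e = {u, v}"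
  shows "linear_forest E"
  unfolding linear_forest_def
proof (intro conjI allI)
  fix v
  show "card {e\<in>E. v \<in> e} \<le> 2"
    using card_mono[OF assms(1), of "{e\<in>E. v \<in> e}"] assms(2) by auto
  show "\<not> has_cycle E"
    using card_ge_3_if_has_cycle[of E] assms by fastforce
qed (use assms in auto)

section \<open>Extending strong path decompositions\<close>

lemma strong_path_decomp_edges:
  assumes "strong_path_decomp k A G" "i < k"
  shows "finite (A i)" "\<forall>e\<in>A i. \<exists>u v. u \<noteq> v \<and> e = {u, v}"
  using assms unfolding strong_path_decomp_def linear_forest_def by blast+

lemma sum_mset_set_extension:
  assumes "\<And>i. i < k \<Longrightarrow> finite (A' i)" "\<And>i. i < k \<Longrightarrow> A i \<subseteq> A' i"
  shows "(\<Sum>i<k. mset_set (A' i)) = (\<Sum>i<k. mset_set (A i)) + (\<Sum>i<k. mset_set (A' i - A i))"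
proof -
  have "mset_set (A' i) = mset_set (A i) + mset_set (A' i - A i)" if "i < k" for i
    using assms[OF that]
    by (metis Un_Diff_cancel Un_absorb1 Diff_disjoint finite_Diff finite_subset mset_set_Union)
  then show ?thesis
    by (simp add: sum.distrib)
qed

lemma strong_path_decomp_new_edges:
  assumes "strong_path_decomp k A G" "strong_path_decomp k A' (G + F)"
    and "\<And>i. i < k \<Longrightarrow> A i \<subseteq> A' i"
  shows "F = (\<Sum>i<k. mset_set (A' i - A i))"
  using assms strong_path_decomp_edges(1)[OF assms(2)] sum_mset_set_extension[of k A' A]
  by (simp add: strong_path_decomp_def)

lemma strongly_extendibleE:
  assumes "strong_path_decomp k A G" "strongly_extendible alpha G k A H"
  obtains A' where "\<And>i. i < k \<Longrightarrow> A i \<subseteq> A' i" "\<And>i. i < k \<Longrightarrow> finite (A' i)"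
    "\<And>i. i < k \<Longrightarrow> alpha \<le> card (A' i)" "(\<Sum>i<k. mset_set (A' i - A i)) \<subseteq># H - G"
proof -
  obtain F A' where F: "F \<subseteq># H - G" and dec': "strong_path_decomp k A' (G + F)"
    and ext: "\<forall>i<k. A i \<subseteq> A' i \<and> alpha \<le> card (A' i)"
    using assms(2) unfolding strongly_extendible_def by blast
  have "F = (\<Sum>i<k. mset_set (A' i - A i))"
    using strong_path_decomp_new_edges[OF assms(1) dec'] ext by blast
  then show thesis
    using F ext strong_path_decomp_edges(1)[OF dec'] by (intro that[of A']) auto
qed

lemma strongly_extendible_size_bound:
  assumes dec: "strong_path_decomp k A G" and ext: "strongly_extendible 2 G k A H"
  shows "2 * card (S 0 k A) + card (S 1 k A) \<le> size (H - G)"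
proof -
  obtain A' where sub: "\<And>i. i < k \<Longrightarrow> A i \<subseteq> A' i" and fin': "\<And>i. i < k \<Longrightarrow> finite (A' i)"
    and two: "\<And>i. i < k \<Longrightarrow> 2 \<le> card (A' i)" and new: "(\<Sum>i<k. mset_set (A' i - A i)) \<subseteq># H - G"
    using strongly_extendibleE[OF dec ext] by blast
  define D where "D i = card (A' i - A i)" for i
  have D: "card (A' i) - card (A i) \<le> D i" if "i < k" for i
    using sub[OF that] fin'[OF that] by (simp add: D_def card_Diff_subset finite_subset)
  have fin_S: "finite (S j k A)" for j
    by (rule finite_subset[of _ "{..<k}"]) (auto simp: S_def)
  have "(\<Sum>i\<in>S 0 k A. 2) \<le> sum D (S 0 k A)"
    using two D by (intro sum_mono) (force simp: S_def)
  moreover have "(\<Sum>i\<in>S 1 k A. 1) \<le> sum D (S 1 k A)"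
    using two D by (intro sum_mono) (force simp: S_def)
  ultimately have "2 * card (S 0 k A) + card (S 1 k A) \<le> sum D (S 0 k A) + sum D (S 1 k A)"
    by simp
  also have "\<dots> \<le> sum D {..<k}"
    using fin_S by (subst sum.union_disjoint[symmetric]) (auto simp: S_def intro!: sum_mono2)
  also have "\<dots> \<le> size (H - G)"
    using size_mset_mono[OF new] by (simp add: D_def)
  finally show ?thesis .
qed

lemma strongly_extendible_edge_bound:
  assumes dec: "strong_path_decomp k A G" and ext: "strongly_extendible 2 G k A H"
  shows "card (S 0 k A) + card (S1uv u v k A) + count (H - G) {u, v} \<le> size (H - G)"
proof -
  obtain A' where sub: "\<And>i. i < k \<Longrightarrow> A i \<subseteq> A' i" and fin': "\<And>i. i < k \<Longrightarrow> finite (A' i)"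
    and two: "\<And>i. i < k \<Longrightarrow> 2 \<le> card (A' i)" and new: "(\<Sum>i<k. mset_set (A' i - A i)) \<subseteq># H - G"
    using strongly_extendibleE[OF dec ext] by blast
  define e where "e = {u, v}"
  define D where "D i = card {x \<in> A' i - A i. x \<noteq> e}" for i
  \<comment> \<open>A' i is a set of at least two edges, so it contains an edge other than e.\<close>
  have D_pos: "1 \<le> D i" if "i < k" "A i \<subseteq> {e}" for i
  proof -
    have "{x \<in> A' i - A i. x \<noteq> e} = A' i - {e}"
      using that sub by auto
    then have "D i = card (A' i - {e})"
      by (simp only: D_def)
    then show ?thesis
      using two[OF that(1)] fin'[OF that(1)] by (auto simp: card_Diff_singleton_if)
  qed
  have fin_S: "finite (S 0 k A)" "finite (S1uv u v k A)"
    by (rule finite_subset[of _ "{..<k}"], auto simp: S_def S1uv_def)+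
  have "(\<Sum>i\<in>S 0 k A. 1) \<le> sum D (S 0 k A)"
    using strong_path_decomp_edges(1)[OF dec]
    by (intro sum_mono D_pos) (auto simp: S_def)
  moreover have "(\<Sum>i\<in>S1uv u v k A. 1) \<le> sum D (S1uv u v k A)"
    by (intro sum_mono D_pos) (auto simp: S1uv_def e_def)
  ultimately have "card (S 0 k A) + card (S1uv u v k A) \<le> sum D (S 0 k A) + sum D (S1uv u v k A)"
    by simp
  also have "\<dots> \<le> sum D {..<k}"
    using fin_S by (subst sum.union_disjoint[symmetric]) (auto simp: S_def S1uv_def intro!: sum_mono2)
  also have "\<dots> = size {#x \<in># (\<Sum>i<k. mset_set (A' i - A i)). x \<noteq> e#}"
    using fin' by (simp add: filter_mset_sum D_def)
  also have "\<dots> \<le> size {#x \<in># H - G. x \<noteq> e#}"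
    using new by (intro size_mset_mono multiset_filter_mono)
  finally show ?thesis
    using size_filter_neq_add_count[of e "H - G"] by (simp add: e_def)
qed

lemma strongly_extendibleI:
  assumes "strong_path_decomp k A G" "\<And>i. i < k \<Longrightarrow> linear_forest (A' i)"
    "\<And>i. i < k \<Longrightarrow> A i \<subseteq> A' i" "\<And>i. i < k \<Longrightarrow> alpha \<le> card (A' i)"
    "(\<Sum>i<k. mset_set (A' i - A i)) \<subseteq># H - G"
  shows "strongly_extendible alpha G k A H"
proof -
  have "strong_path_decomp k A' (G + (\<Sum>i<k. mset_set (A' i - A i)))"
    using assms(1-3) sum_mset_set_extension[of k A' A]
    by (simp add: strong_path_decomp_def linear_forest_def)
  then show ?thesis
    unfolding strongly_extendible_def using assms(3-5) by blast
qed

lemma S1_fibre_eq_S1uv: "{i \<in> S 1 k A. the_elem (A i) = {u, v}} = S1uv u v k A"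
proof (intro set_eqI iffI)
  fix i
  assume "i \<in> {i \<in> S 1 k A. the_elem (A i) = {u, v}}"
  then obtain x where "i < k" "A i = {x}" "the_elem (A i) = {u, v}"
    by (auto simp: S_def card_1_singleton_iff)
  then show "i \<in> S1uv u v k A"
    by (simp add: S1uv_def)
qed (simp add: S_def S1uv_def)

lemma count_add_S1_fibre_le:
  assumes edges: "\<And>e. e \<in># H - G \<Longrightarrow> \<exists>u v. u \<noteq> v \<and> e = {u, v}"
    and B1: "2 * card (S 0 k A) + card (S 1 k A) \<le> size (H - G)"
    and B2: "\<And>u v. {u, v} \<in># H - G \<Longrightarrow>
      card (S 0 k A) + card (S1uv u v k A) + count (H - G) {u, v} \<le> size (H - G)"
  shows "count (H - G) x + card {i \<in> S 1 k A. the_elem (A i) = x} + card (S 0 k A) \<le> size (H - G)"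
proof (cases "x \<in># H - G")
  case True
  then obtain u v where "x = {u, v}"
    using edges by blast
  then show ?thesis
    using True B2[of u v] S1_fibre_eq_S1uv[of k A u v] by simp
next
  case False
  have "card {i \<in> S 1 k A. the_elem (A i) = x} \<le> card (S 1 k A)"
    by (rule card_mono) (auto intro: finite_subset[of _ "{..<k}"] simp: S_def)
  moreover have "count (H - G) x = 0"
    using False by (metis count_eq_zero_iff)
  ultimately show ?thesis
    using B1 by linarith
qed

lemma sum_if_mem_subset:
  assumes "finite J" "I \<subseteq> J"
  shows "(\<Sum>i\<in>J. if i \<in> I then h i else 0) = sum h I"
proof -
  have "J \<inter> I = I"
    using assms(2) by blast
  then show ?thesis
    using sum.inter_restrict[OF assms(1), of h I] by simp
qed

lemma sum_new_edges_of_completed_classes: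
  fixes k :: nat
  assumes "I0 \<subseteq> {..<k}" "I1 \<subseteq> {..<k}" "I0 \<inter> I1 = {}"
    and "\<And>i. i \<in> I0 \<Longrightarrow> A i = {}" "\<And>i. i \<in> I1 \<Longrightarrow> A i = {a i}"
    and "\<And>i. i \<in> I0 \<union> I1 \<Longrightarrow> g i \<noteq> a i"
  shows "(\<Sum>i<k. mset_set ((if i \<in> I0 \<union> I1 then {a i, g i} else A i) - A i))
    = (\<Sum>i\<in>I0. {#a i#}) + (\<Sum>i\<in>I0 \<union> I1. {#g i#})"
proof -
  have new: "mset_set ((if i \<in> I0 \<union> I1 then {a i, g i} else A i) - A i) =
      (if i \<in> I0 then {#a i#} else {#}) + (if i \<in> I0 \<union> I1 then {#g i#} else {#})" for i
  proof -
    consider "i \<in> I0" | "i \<in> I1" | "i \<notin> I0 \<union> I1"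
      by blast
    then show ?thesis
    proof cases
      case 1
      then have "g i \<noteq> a i"
        using assms(6) by blast
      then show ?thesis
        using 1 assms(4) by simp
    next
      case 2
      then have "i \<notin> I0" "g i \<noteq> a i"
        using assms(3,6) by auto
      then show ?thesis
        using 2 assms(5) by auto
    qed simp
  qed
  have "I0 \<union> I1 \<subseteq> {..<k}"
    using assms(1,2) by blast
  show ?thesis
    unfolding new sum.distrib sum_if_mem_subset[OF finite_lessThan assms(1)]
      sum_if_mem_subset[OF finite_lessThan \<open>I0 \<union> I1 \<subseteq> {..<k}\<close>]
    by (rule refl)
qed

lemma size_bounds_imp_strongly_extendible:
  assumes dec: "strong_path_decomp k A G"
    and edges: "\<And>e. e \<in># H - G \<Longrightarrow> \<exists>u v. u \<noteq> v \<and> e = {u, v}"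
    and B1: "2 * card (S 0 k A) + card (S 1 k A) \<le> size (H - G)"
    and B2: "\<And>u v. {u, v} \<in># H - G \<Longrightarrow>
      card (S 0 k A) + card (S1uv u v k A) + count (H - G) {u, v} \<le> size (H - G)"
  shows "strongly_extendible 2 G k A H"
proof -
  define I0 I1 where "I0 = S 0 k A" and "I1 = S 1 k A"
  define f where "f i = the_elem (A i)" for i
  have I0: "I0 \<subseteq> {..<k}" "\<And>i. i \<in> I0 \<Longrightarrow> A i = {}"
    using strong_path_decomp_edges(1)[OF dec] by (auto simp: I0_def S_def)
  have I1: "I1 \<subseteq> {..<k}" "\<And>i. i \<in> I1 \<Longrightarrow> A i = {f i}"
    by (auto simp: I1_def S_def f_def card_1_singleton_iff)
  have disj: "I0 \<inter> I1 = {}"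
    by (auto simp: I0_def I1_def S_def)
  have fin: "finite I0" "finite I1"
    using I0(1) I1(1) by (auto intro: finite_subset)
  obtain a g where a_I1: "\<forall>i\<in>I1. a i = f i" and g: "\<forall>i\<in>I0 \<union> I1. g i \<noteq> a i"
    and new: "(\<Sum>i\<in>I0. {#a i#}) + (\<Sum>i\<in>I0 \<union> I1. {#g i#}) \<subseteq># H - G"
    using pair_completion[OF fin disj, of "H - G" f]
      B1 count_add_S1_fibre_le[OF edges B1 B2] unfolding I0_def I1_def f_def by blast
  define A' where "A' i = (if i \<in> I0 \<union> I1 then {a i, g i} else A i)" for i
  have "(\<Sum>i<k. mset_set (A' i - A i)) = (\<Sum>i\<in>I0. {#a i#}) + (\<Sum>i\<in>I0 \<union> I1. {#g i#})"
    unfolding A'_def using I0(2) I1(2) a_I1 g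
    by (intro sum_new_edges_of_completed_classes[OF I0(1) I1(1) disj]) auto
  then have new_A': "(\<Sum>i<k. mset_set (A' i - A i)) \<subseteq># H - G"
    using new by simp
  have a_new: "a i \<in># H - G" if "i \<in> I0" for i
    using mset_subset_eqD[OF new] fin that by (auto simp: set_mset_sum)
  have g_new: "g i \<in># H - G" if "i \<in> I0 \<union> I1" for i
    using mset_subset_eqD[OF new] fin that by (auto simp: set_mset_sum)
  have "linear_forest (A' i) \<and> A i \<subseteq> A' i \<and> 2 \<le> card (A' i)" if "i < k" for i
  proof (cases "i \<in> I0 \<union> I1")
    case True
    have ga: "g i \<noteq> a i" and g_edge: "\<exists>u v. u \<noteq> v \<and> g i = {u, v}"
      using True g g_new edges by blast+
    have a: "A i \<subseteq> {a i} \<and> (\<exists>u v. u \<noteq> v \<and> a i = {u, v})"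
    proof (cases "i \<in> I0")
      case True
      then show ?thesis
        using I0(2) a_new edges by simp
    next
      case False
      then have "A i = {a i}"
        using \<open>i \<in> I0 \<union> I1\<close> I1(2) a_I1 by simp
      then show ?thesis
        using strong_path_decomp_edges(2)[OF dec \<open>i < k\<close>] by simp
    qed
    have "card {a i, g i} = 2"
      using ga by simp
    moreover have "linear_forest {a i, g i}"
      using g_edge a \<open>card {a i, g i} = 2\<close> by (intro linear_forest_if_card_le_2) auto
    ultimately show ?thesis
      using True a by (auto simp: A'_def)
  next
    case False
    then have "card (A i) \<noteq> 0" "card (A i) \<noteq> 1"
      using \<open>i < k\<close> by (auto simp: I0_def I1_def S_def)
    then show ?thesis
      using False dec \<open>i < k\<close> by (auto simp: A'_def strong_path_decomp_def)
  qed
  then show ?thesis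
    by (intro strongly_extendibleI[OF dec _ _ _ new_A']) auto
qed

lemma strongly_extendible_complete_multi_iff:
  assumes "lam < mu" and dec: "strong_path_decomp k A (complete_multi lam n)"
  shows "strongly_extendible 2 (complete_multi lam n) k A (complete_multi mu n) \<longleftrightarrow>
    2 * card (S 0 k A) + card (S 1 k A) \<le> (mu - lam) * card (pairs n) \<and>
    (\<forall>u<n. \<forall>v<n. u \<noteq> v \<longrightarrow>
      card (S 0 k A) + card (S1uv u v k A) + (mu - lam) \<le> (mu - lam) * card (pairs n))"
    (is "?ext \<longleftrightarrow> ?B1 \<and> ?B2")
proof -
  define M where "M = complete_multi mu n - complete_multi lam n"
  have count_M: "count M e = (if e \<in> pairs n then mu - lam else 0)" for e
    by (simp add: M_def complete_multi_diff count_complete_multi)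
  have size_M: "size M = (mu - lam) * card (pairs n)"
    by (simp add: M_def complete_multi_diff size_complete_multi)
  have in_M: "e \<in># M \<longleftrightarrow> e \<in> pairs n" for e
    using assms(1) by (simp add: count_M flip: count_greater_zero_iff)
  show ?thesis
  proof
    assume ext: ?ext
    have ?B2
    proof (intro allI impI)
      fix u v
      assume "u < n" "v < n" "u \<noteq> v"
      then show "card (S 0 k A) + card (S1uv u v k A) + (mu - lam) \<le> (mu - lam) * card (pairs n)"
        using strongly_extendible_edge_bound[OF dec ext, of u v]
        by (simp add: M_def[symmetric] size_M count_M doubleton_in_pairs_iff)
    qed
    then show "?B1 \<and> ?B2"
      using strongly_extendible_size_bound[OF dec ext] by (simp add: M_def[symmetric] size_M)
  next
    assume "?B1 \<and> ?B2"
    then show ?ext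
      by (intro size_bounds_imp_strongly_extendible[OF dec])
        (auto simp: M_def[symmetric] size_M count_M in_M doubleton_in_pairs_iff dest: pairs_are_edges)
  qed
qed

theorem proposition2:
  fixes n lam mu k :: nat and A :: "nat \<Rightarrow> nat set set"
  assumes "0 < n" "0 < lam" "0 < mu" "lam < mu"
    and "strong_path_decomp k A (complete_multi lam n)"
  shows "strongly_extendible 2 (complete_multi lam n) k A (complete_multi mu n) \<longleftrightarrow>
    (2 * int (card (S 0 k A)) + int (card (S 1 k A))
        \<le> int (mu - lam) * (int (n * (n - 1)) div 2)) \<and>
    (\<forall>u<n. \<forall>v<n. u \<noteq> v \<longrightarrow>
       int (card (S 0 k A)) + int (card (S1uv u v k A))
        \<le> int (mu - lam) * (int (n * (n - 1)) div 2 - 1))"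
proof -
  have half: "int (n * (n - 1)) div 2 = int (card (pairs n))"
    by (simp add: card_pairs zdiv_int)
  have B1: "2 * int a + int b \<le> int d * int m \<longleftrightarrow> 2 * a + b \<le> d * m" for a b d m :: nat
    by (metis of_nat_add of_nat_le_iff of_nat_mult of_nat_numeral)
  have B2: "int a + int b \<le> int d * (int m - 1) \<longleftrightarrow> a + b + d \<le> d * m" for a b d m :: nat
  proof -
    have "int d * (int m - 1) = int (d * m) - int d"
      by (simp add: algebra_simps)
    then show ?thesis
      by linarith
  qed
  show ?thesis
    unfolding half B1 B2 using strongly_extendible_complete_multi_iff[OF assms(4,5)] .
qed

end
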